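(* Let $\mathbf{k}$ be a commutative ring, $n\ge0$, $\mathcal{A}=\mathbf{k}[S_n]$. For every $w\in S_n$, \[\mathbf{B}_{\operatorname{LRM}'(w)}\,w = w + (\text{a }\mathbf{k}\text{-linear combination of permutations that are lexicographically smaller than } w).\]
   Context: $S_n$ is the symmetric group on $[n]=\{1,\dots,n\}$, with product $(uw)(i)=u(w(i))$. $\operatorname{Des}(u)=\{i\in[n-1]:u(i)>u(i+1)\}$; for $I\subseteq[n-1]$, $\mathbf{B}_I=\sum_{u\in S_n,\ \operatorname{Des}(u)\subseteq I}u$. $\operatorname{LRM}(w)=\{i\in[n]: w(k)>i \text{ for all } k<w^{-1}(i)\}$ (left-to-right minima), and $\operatorname{LRM}'(w)=\{\ell-1:\ell\in\operatorname{LRM}(w),\ \ell>1\}\subseteq[n-1]$. Lexicographic order on $S_n$ compares one-line notations $(\sigma(1),\dots,\sigma(n))$ lexicographically. *)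

theory Defs
  imports "HOL-Combinatorics.Permutations"
begin

text \<open>Permutations of [n] = {1..n}, as functions nat => nat fixing everything outside {1..n}.
  Product (u w)(i) = u (w i), i.e. composition u o w.\<close>

definition perms :: "nat \<Rightarrow> (nat \<Rightarrow> nat) set" where
  "perms n = {\<sigma>. \<sigma> permutes {1..n}}"

text \<open>The group algebra k[S_n]: functions perms n -> k (coefficient vectors),
  extended by 0 outside perms n.\<close>

definition of_perm :: "(nat \<Rightarrow> nat) \<Rightarrow> ((nat \<Rightarrow> nat) \<Rightarrow> 'k::comm_ring_1)" where
  "of_perm w = (\<lambda>\<sigma>. if \<sigma> = w then 1 else 0)"

definition ga_mult :: "nat \<Rightarrow> ((nat \<Rightarrow> nat) \<Rightarrow> 'k::comm_ring_1) \<Rightarrow> ((nat \<Rightarrow> nat) \<Rightarrow> 'k)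
    \<Rightarrow> ((nat \<Rightarrow> nat) \<Rightarrow> 'k)" where
  "ga_mult n x y = (\<lambda>\<sigma>. \<Sum>p\<in>{(u, v). u \<in> perms n \<and> v \<in> perms n \<and> u \<circ> v = \<sigma>}.
                          x (fst p) * y (snd p))"

definition Des :: "nat \<Rightarrow> (nat \<Rightarrow> nat) \<Rightarrow> nat set" where
  "Des n u = {i \<in> {1..n-1}. u i > u (i + 1)}"

definition B :: "nat \<Rightarrow> nat set \<Rightarrow> ((nat \<Rightarrow> nat) \<Rightarrow> 'k::comm_ring_1)" where
  "B n I = (\<lambda>u. if u \<in> perms n \<and> Des n u \<subseteq> I then 1 else 0)"

definition LRM :: "nat \<Rightarrow> (nat \<Rightarrow> nat) \<Rightarrow> nat set" where
  "LRM n w = {i \<in> {1..n}. \<forall>k. 1 \<le> k \<and> k < inv w i \<longrightarrow> w k > i}"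

definition LRM' :: "nat \<Rightarrow> (nat \<Rightarrow> nat) \<Rightarrow> nat set" where
  "LRM' n w = {l - 1 | l. l \<in> LRM n w \<and> l > 1}"

definition lex_less :: "nat \<Rightarrow> (nat \<Rightarrow> nat) \<Rightarrow> (nat \<Rightarrow> nat) \<Rightarrow> bool" where
  "lex_less n \<sigma> \<tau> \<longleftrightarrow> (\<exists>i\<in>{1..n}. (\<forall>j\<in>{1..<i}. \<sigma> j = \<tau> j) \<and> \<sigma> i < \<tau> i)"

end

(*
  Right multiplication by w permutes the basis, so the coefficient of sigma in B_I w is 1 when
  u = sigma w^-1 satisfies Des(u) \<subseteq> I and 0 otherwise. It thus suffices that Des(u) \<subseteq> LRM'(w)
  and u \<noteq> id force u w <lex w. Let i be the first position at which u moves w(i), and M the minimum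
  of w(1), ..., w(i-1). The permutation u can only descend just before a left-to-right minimum of w;
  those that are \<ge> M occur before position i and are fixed, so u(y) \<ge> y on [M, n] and u fixes
  [M, n] pointwise. No left-to-right minimum lies in (w(i), M), so u increases on [w(i), M - 1]
  while mapping this interval below M; hence u(w(i)) < w(i).
*)
theory Submission
  imports Defs
begin

lemma inj_on_ge_self_imp_fixed:
  fixes f :: "'a::linorder \<Rightarrow> 'a"
  assumes fin: "finite S" and inj: "inj_on f S" and maps: "f ` S \<subseteq> S"
    and ge: "\<And>x. x \<in> S \<Longrightarrow> x \<le> f x" and x: "x \<in> S"
  shows "f x = x"
proof (rule ccontr)
  assume "f x \<noteq> x"
  define T where "T = {y \<in> S. f y \<noteq> y}"
  have "finite T" "T \<noteq> {}" using fin x \<open>f x \<noteq> x\<close> unfolding T_def by auto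
  then have yT: "Max T \<in> T" and ymax: "\<And>z. z \<in> T \<Longrightarrow> z \<le> Max T" by simp_all
  define y where "y = Max T"
  have yS: "y \<in> S" and "f y \<noteq> y" using yT unfolding y_def T_def by auto
  then have "y < f y" using ge[of y] by simp
  moreover have fyS: "f y \<in> S" using maps yS by blast
  ultimately have "f y \<notin> T" using ymax unfolding y_def by fastforce
  then have "f (f y) = f y" using fyS unfolding T_def by blast
  then have "f y = y" using inj_onD[OF inj _ fyS yS] by blast
  with \<open>f y \<noteq> y\<close> show False ..
qed

lemma le_image_if_ascent_or_fixed:
  fixes f :: "nat \<Rightarrow> nat"
  assumes "a \<le> f a"
    and asc: "\<And>m. a \<le> m \<Longrightarrow> m < b \<Longrightarrow> f m < f (Suc m) \<or> f (Suc m) = Suc m"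
    and "a \<le> y" "y \<le> b"
  shows "y \<le> f y"
  using \<open>a \<le> y\<close> \<open>y \<le> b\<close>
proof (induction y rule: dec_induct)
  case base
  show ?case by fact
next
  case (step m)
  then show ?case using asc[of m] by auto
qed

lemma add_le_if_ascents:
  fixes f :: "nat \<Rightarrow> nat"
  assumes "a \<le> b" and "\<And>m. a \<le> m \<Longrightarrow> m < b \<Longrightarrow> f m < f (Suc m)"
  shows "f a + (b - a) \<le> f b"
  using assms
proof (induction b rule: dec_induct)
  case (step m)
  then have "f a + (m - a) \<le> f m" "f m < f (Suc m)" by simp_all
  then show ?case using \<open>a \<le> m\<close> by linarith
qed simp

lemma permutes_atLeastAtMost_le_max:
  fixes u :: "nat \<Rightarrow> nat"
  assumes "u permutes {1..n}"
  shows "u y \<le> max y n"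
  using permutes_in_image[OF assms, of y] permutes_not_in[OF assms, of y]
  by (cases "y \<in> {1..n}") auto

lemma permutes_atLeastAtMost_pos:
  fixes u :: "nat \<Rightarrow> nat"
  assumes "u permutes {1..n}" and "0 < y"
  shows "0 < u y"
  using permutes_in_image[OF assms(1), of y] permutes_not_in[OF assms(1), of y] assms(2)
  by (cases "y \<in> {1..n}") auto

lemma ascent_if_not_Des:
  assumes u: "u permutes {1..n}" and "m \<notin> Des n u"
  shows "u m < u (Suc m)"
proof (cases "m \<in> {1..n-1}")
  case True
  then have "\<not> u (Suc m) < u m" using assms(2) unfolding Des_def by simp
  moreover have "u m \<noteq> u (Suc m)" by (simp add: permutes_inj[OF u, THEN inj_eq])
  ultimately show ?thesis by simp
next
  case False
  then consider "m = 0" | "n \<le> m" by fastforce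
  then show ?thesis
  proof cases
    case 1
    then show ?thesis using permutes_not_in[OF u, of 0] permutes_atLeastAtMost_pos[OF u, of 1] by simp
  next
    case 2
    then show ?thesis using permutes_not_in[OF u, of "Suc m"] permutes_atLeastAtMost_le_max[OF u, of m]
      by simp
  qed
qed

lemma permutes_fixes_upper_interval:
  assumes u: "u permutes {1..n}" and D: "Des n u \<subseteq> I" and "1 \<le> M" and "u M = M"
    and fixI: "\<And>d. d \<in> I \<Longrightarrow> M \<le> Suc d \<Longrightarrow> u (Suc d) = Suc d"
    and y: "y \<in> {M..n}"
  shows "u y = y"
proof -
  have ge: "z \<le> u z" if "z \<in> {M..n}" for z
  proof (rule le_image_if_ascent_or_fixed[of M u n])
    show "M \<le> u M" using \<open>u M = M\<close> by simp
    show "u m < u (Suc m) \<or> u (Suc m) = Suc m" if "M \<le> m" for m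
      using fixI[of m] ascent_if_not_Des[OF u, of m] D that by auto
  qed (use that in auto)
  have "u ` {M..n} \<subseteq> {M..n}"
  proof
    fix z assume "z \<in> u ` {M..n}"
    then obtain y where "y \<in> {M..n}" "z = u y" by blast
    moreover have "u y \<le> n" using permutes_in_image[OF u, of y] \<open>1 \<le> M\<close> \<open>y \<in> {M..n}\<close> by auto
    ultimately show "z \<in> {M..n}" using ge[of y] by auto
  qed
  moreover have "inj_on u {M..n}" using permutes_inj[OF u] by (rule inj_on_subset) simp
  ultimately show ?thesis using inj_on_ge_self_imp_fixed[of "{M..n}" u y] ge y by blast
qed

lemma permutes_image_le_below_gap:
  assumes u: "u permutes {1..n}" and D: "Des n u \<subseteq> I"
    and fix_upper: "\<And>y. y \<in> {M..n} \<Longrightarrow> u y = y"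
    and "1 \<le> x" "x < M" and gap: "\<And>d. d \<in> I \<Longrightarrow> x \<le> d \<Longrightarrow> M \<le> Suc d"
  shows "u x \<le> x"
proof -
  have "u (M - 1) \<notin> {M..n}"
  proof
    assume "u (M - 1) \<in> {M..n}"
    then have "u (u (M - 1)) = u (M - 1)" using fix_upper by blast
    then have "u (M - 1) = M - 1" by (simp add: permutes_inj[OF u, THEN inj_eq])
    with \<open>u (M - 1) \<in> {M..n}\<close> \<open>x < M\<close> show False by auto
  qed
  moreover have "u (M - 1) \<le> max (M - 1) n" by (rule permutes_atLeastAtMost_le_max[OF u])
  ultimately have top: "u (M - 1) \<le> M - 1" by auto
  have "u x + (M - 1 - x) \<le> u (M - 1)"
  proof (rule add_le_if_ascents)
    fix m assume "x \<le> m" "m < M - 1"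
    then have "m \<notin> I" using gap[of m] by fastforce
    then show "u m < u (Suc m)" using ascent_if_not_Des[OF u] D by blast
  qed (use \<open>x < M\<close> in simp)
  with top \<open>x < M\<close> show ?thesis by linarith
qed

lemma LRM'_imp_Suc_LRM:
  assumes "d \<in> LRM' n w"
  shows "Suc d \<in> LRM n w"
  using assms unfolding LRM'_def by auto

lemma LRM_position:
  assumes w: "w permutes {1..n}" and l: "l \<in> LRM n w"
  shows "inv w l \<in> {1..n}" and "w (inv w l) = l"
proof -
  have "l \<in> {1..n}" using l unfolding LRM_def by simp
  then show "inv w l \<in> {1..n}" using permutes_in_image[OF permutes_inv[OF w]] by blast
  show "w (inv w l) = l" using permutes_inverses(1)[OF w] .
qed

lemma LRM_le_if_not_before:
  assumes w: "w permutes {1..n}" and l: "l \<in> LRM n w" and "1 \<le> i" "i \<le> inv w l"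
  shows "l \<le> w i"
proof (cases "i = inv w l")
  case True
  then show ?thesis using LRM_position(2)[OF w l] by simp
next
  case False
  then show ?thesis using l assms(3,4) unfolding LRM_def by fastforce
qed

lemma permutes_moved_value_decreases:
  assumes w: "w permutes {1..n}" and u: "u permutes {1..n}" and D: "Des n u \<subseteq> LRM' n w"
    and i: "i \<in> {1..n}" and prefix: "\<And>j. j \<in> {1..<i} \<Longrightarrow> u (w j) = w j"
    and moved: "u (w i) \<noteq> w i"
  shows "u (w i) < w i"
proof -
  \<comment> \<open>the value of the last left-to-right minimum of w before position i, or Suc n if i = 1\<close>
  define M where "M = Min (insert (Suc n) (w ` {1..<i}))"
  have M_le: "M \<le> w j" if "j \<in> {1..<i}" for j
    unfolding M_def by (rule Min_le) (use that in auto)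
  have M_cases: "M = Suc n \<or> M \<in> w ` {1..<i}"
    unfolding M_def using Min_in[of "insert (Suc n) (w ` {1..<i})"] by auto
  have "1 \<le> M"
    using M_cases i permutes_in_image[OF w] by fastforce
  have "u M = M"
    using M_cases prefix permutes_not_in[OF u, of "Suc n"] by auto
  have LRM_fixed: "u l = l" if "l \<in> LRM n w" "inv w l < i" for l
    using prefix[of "inv w l"] LRM_position[OF w that(1)] that(2) by simp
  have LRM_before: "inv w l < i" if l: "l \<in> LRM n w" and "M \<le> l" for l
  proof (rule ccontr)
    assume "\<not> inv w l < i"
    then have "\<forall>a \<in> insert (Suc n) (w ` {1..<i}). l < a"
      using l unfolding LRM_def by auto
    then have "l < M" unfolding M_def by simp
    with \<open>M \<le> l\<close> show False by simp
  qed
  have fix_upper: "u y = y" if "y \<in> {M..n}" for y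
  proof (rule permutes_fixes_upper_interval[OF u D \<open>1 \<le> M\<close> \<open>u M = M\<close> _ that])
    fix d assume "d \<in> LRM' n w" "M \<le> Suc d"
    then show "u (Suc d) = Suc d" using LRM'_imp_Suc_LRM LRM_before LRM_fixed by blast
  qed
  have x: "w i \<in> {1..n}" using permutes_in_image[OF w] i by blast
  then have "w i < M" using fix_upper[of "w i"] moved by fastforce
  have "u (w i) \<le> w i"
  proof (rule permutes_image_le_below_gap[OF u D fix_upper])
    show "1 \<le> w i" "w i < M" using x \<open>w i < M\<close> by simp_all
    fix d assume "d \<in> LRM' n w" "w i \<le> d"
    then have l: "Suc d \<in> LRM n w" and "w i < Suc d" using LRM'_imp_Suc_LRM by auto
    then have "inv w (Suc d) < i" using LRM_le_if_not_before[OF w l] i by fastforce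
    then show "M \<le> Suc d"
      using M_le[of "inv w (Suc d)"] LRM_position[OF w l] by simp
  qed
  with moved show ?thesis by simp
qed

lemma lex_less_if_Des_subset_LRM':
  assumes w: "w permutes {1..n}" and u: "u permutes {1..n}" and D: "Des n u \<subseteq> LRM' n w"
    and "u \<noteq> id"
  shows "lex_less n (u \<circ> w) w"
proof -
  obtain y where "u y \<noteq> y" using \<open>u \<noteq> id\<close> by (auto simp: fun_eq_iff)
  then have "inv w y \<in> {1..n} \<and> u (w (inv w y)) \<noteq> w (inv w y)"
    using permutes_not_in[OF u] permutes_in_image[OF permutes_inv[OF w]] permutes_inverses(1)[OF w]
    by metis
  then obtain i where i: "i \<in> {1..n}" "u (w i) \<noteq> w i"
    and least: "\<And>j. j < i \<Longrightarrow> \<not> (j \<in> {1..n} \<and> u (w j) \<noteq> w j)"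
    using exists_least_iff[of "\<lambda>i. i \<in> {1..n} \<and> u (w i) \<noteq> w i"] by blast
  have prefix: "u (w j) = w j" if "j \<in> {1..<i}" for j
    using least[of j] that i(1) by auto
  have "u (w i) < w i" by (rule permutes_moved_value_decreases[OF w u D i(1) prefix i(2)])
  then show ?thesis unfolding lex_less_def using i(1) prefix by (intro bexI[of _ i]) auto
qed

lemma finite_perms: "finite (perms n)"
  unfolding perms_def using finite_permutations[of "{1..n}"] by simp

lemma comp_inv_in_perms_iff:
  assumes "w \<in> perms n"
  shows "\<sigma> \<circ> inv w \<in> perms n \<longleftrightarrow> \<sigma> \<in> perms n"
proof
  have w: "w permutes {1..n}" using assms unfolding perms_def by simp
  show "\<sigma> \<in> perms n" if "\<sigma> \<circ> inv w \<in> perms n"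
  proof -
    have "(\<sigma> \<circ> inv w) \<circ> w permutes {1..n}"
      using permutes_compose[OF w] that unfolding perms_def by simp
    then show ?thesis unfolding perms_def o_assoc[symmetric] permutes_inv_o(2)[OF w] by simp
  qed
  show "\<sigma> \<circ> inv w \<in> perms n" if "\<sigma> \<in> perms n"
    using permutes_compose[OF permutes_inv[OF w]] that unfolding perms_def by simp
qed

lemma ga_mult_of_perm_right:
  assumes w: "w \<in> perms n"
  shows "ga_mult n x (of_perm w) \<sigma> = (if \<sigma> \<in> perms n then x (\<sigma> \<circ> inv w) else 0)"
proof -
  have inv_w: "w \<circ> inv w = id" "inv w \<circ> w = id"
    using w permutes_inv_o unfolding perms_def by blast+
  define S where "S = {(u, v). u \<in> perms n \<and> v \<in> perms n \<and> u \<circ> v = \<sigma>}"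
  have "finite S"
    by (rule finite_subset[of _ "perms n \<times> perms n"]) (auto simp: S_def finite_perms)
  have summand: "x u * of_perm w v = (if (u, v) = (\<sigma> \<circ> inv w, w) then x (\<sigma> \<circ> inv w) else 0)"
    if "(u, v) \<in> S" for u v
    using that inv_w(1) unfolding S_def of_perm_def by (auto simp: o_assoc[symmetric])
  have "ga_mult n x (of_perm w) \<sigma> = (\<Sum>p\<in>S. x (fst p) * of_perm w (snd p))"
    unfolding ga_mult_def S_def by simp
  also have "\<dots> = (\<Sum>p\<in>S. if p = (\<sigma> \<circ> inv w, w) then x (\<sigma> \<circ> inv w) else 0)"
    using summand by (intro sum.cong) auto
  also have "\<dots> = (if (\<sigma> \<circ> inv w, w) \<in> S then x (\<sigma> \<circ> inv w) else 0)"
    using \<open>finite S\<close> by simp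
  also have "(\<sigma> \<circ> inv w, w) \<in> S \<longleftrightarrow> \<sigma> \<in> perms n"
    unfolding S_def using w inv_w(2) comp_inv_in_perms_iff[OF w] by (simp add: o_assoc[symmetric])
  finally show ?thesis .
qed

lemma sum_mult_of_perm:
  assumes "finite V"
  shows "(\<Sum>v\<in>V. c v * of_perm v \<sigma>) = (if \<sigma> \<in> V then c \<sigma> else 0)"
  using assms unfolding of_perm_def by (simp add: if_distrib[of "(*) _"] eq_commute[of \<sigma>] cong: if_cong)

lemma ga_mult_B_LRM'_of_perm_unless_lex_less:
  assumes w: "w \<in> perms n" and \<sigma>: "\<sigma> \<notin> {v \<in> perms n. lex_less n v w}"
  shows "ga_mult n (B n (LRM' n w)) (of_perm w) \<sigma> = of_perm w \<sigma>"
proof -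
  have wp: "w permutes {1..n}" using w unfolding perms_def by simp
  have \<sigma>_eq: "(\<sigma> \<circ> inv w) \<circ> w = \<sigma>" by (simp add: o_assoc[symmetric] permutes_inv_o(2)[OF wp])
  have B_eq: "ga_mult n (B n (LRM' n w)) (of_perm w) \<sigma>
      = (if \<sigma> \<circ> inv w \<in> perms n \<and> Des n (\<sigma> \<circ> inv w) \<subseteq> LRM' n w then 1 else 0)"
    unfolding ga_mult_of_perm_right[OF w] B_def comp_inv_in_perms_iff[OF w] by simp
  show ?thesis
  proof (cases "\<sigma> = w")
    case True
    have "Des n id = {}" unfolding Des_def by simp
    then show ?thesis
      unfolding B_eq using True permutes_inv_o(1)[OF wp] w by (simp add: of_perm_def perms_def)
  next
    case False
    have "\<not> (\<sigma> \<circ> inv w \<in> perms n \<and> Des n (\<sigma> \<circ> inv w) \<subseteq> LRM' n w)"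
    proof
      assume u: "\<sigma> \<circ> inv w \<in> perms n \<and> Des n (\<sigma> \<circ> inv w) \<subseteq> LRM' n w"
      moreover have "\<sigma> \<circ> inv w \<noteq> id" using False \<sigma>_eq by auto
      ultimately have "lex_less n \<sigma> w"
        using lex_less_if_Des_subset_LRM'[OF wp, of "\<sigma> \<circ> inv w"] \<sigma>_eq unfolding perms_def by simp
      with u \<sigma> show False using comp_inv_in_perms_iff[OF w] by blast
    qed
    then show ?thesis unfolding B_eq using False by (simp add: of_perm_def)
  qed
qed

theorem corollary3p5:
  fixes n :: nat and w :: "nat \<Rightarrow> nat"
  assumes "w \<in> perms n"
  shows "\<exists>c :: (nat \<Rightarrow> nat) \<Rightarrow> 'k::comm_ring_1.
           ga_mult n (B n (LRM' n w)) (of_perm w) =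
           (\<lambda>\<sigma>. of_perm w \<sigma> +
                 (\<Sum>v\<in>{v \<in> perms n. lex_less n v w}. c v * of_perm v \<sigma>))"
proof -
  define V where "V = {v \<in> perms n. lex_less n v w}"
  define c :: "(nat \<Rightarrow> nat) \<Rightarrow> 'k" where "c = ga_mult n (B n (LRM' n w)) (of_perm w)"
  have "finite V" unfolding V_def using finite_perms by simp
  have "c \<sigma> = of_perm w \<sigma> + (\<Sum>v\<in>V. c v * of_perm v \<sigma>)" for \<sigma>
  proof (cases "\<sigma> \<in> V")
    case True
    then have "\<sigma> \<noteq> w" unfolding V_def lex_less_def by auto
    then have "of_perm w \<sigma> = (0 :: 'k)" by (simp add: of_perm_def)
    then show ?thesis using True sum_mult_of_perm[OF \<open>finite V\<close>, of c \<sigma>] by simp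
  next
    case False
    then have "c \<sigma> = of_perm w \<sigma>"
      unfolding c_def V_def by (rule ga_mult_B_LRM'_of_perm_unless_lex_less[OF assms])
    then show ?thesis using False sum_mult_of_perm[OF \<open>finite V\<close>, of c \<sigma>] by simp
  qed
  then have "ga_mult n (B n (LRM' n w)) (of_perm w) = (\<lambda>\<sigma>. of_perm w \<sigma> + (\<Sum>v\<in>V. c v * of_perm v \<sigma>))"
    unfolding c_def[symmetric] by (rule ext)
  then show ?thesis unfolding V_def by blast
qed

end
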